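(* Let $r\ge 1$, $n$ be integers and let $\sigma,\sigma':\mathbb{Z}_n\to\{0,1\}$ be configurations with $\mathrm{maj}_r(\sigma)=\sigma'$. If $i\in\mathbb{Z}_n$ satisfies $\sigma'(i)\ne\sigma'(i+1)$, then $\sigma(i-r)=\sigma'(i)$ and $\sigma(i+1+r)=\sigma'(i+1)$.
   Context: Cells are elements of $\mathbb{Z}_n$, arithmetic mod $n$. For a configuration $\sigma$ and $\beta\in\{0,1\}$, $\#_\beta(\sigma[I])$ counts cells $\ell$ in the cyclic interval $I$ with $\sigma(\ell)=\beta$. The majority rule with radius $r$: $\mathrm{maj}_r(\sigma)(i)=0$ if $\#_0(\sigma[[i-r,i+r]])>\#_1(\sigma[[i-r,i+r]])$ and $=1$ otherwise, where $[i-r,i+r]$ is the cyclic interval $i-r,\dots,i+r$. *)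

theory Defs
  imports Main
begin

text \<open>Cells of Z_n are represented by the integers 0..n-1; indices are reduced mod n.
  A configuration is a function sigma :: int => nat, meaningful on {0..<n} with values in {0,1}.\<close>

definition cyc_interval :: "int \<Rightarrow> int \<Rightarrow> int \<Rightarrow> int set" where
  "cyc_interval n a b = (\<lambda>k. (a + k) mod n) ` {0..b - a}"

definition cnt :: "(int \<Rightarrow> nat) \<Rightarrow> nat \<Rightarrow> int set \<Rightarrow> nat" where
  "cnt \<sigma> \<beta> I = card {l \<in> I. \<sigma> l = \<beta>}"

definition maj :: "int \<Rightarrow> nat \<Rightarrow> (int \<Rightarrow> nat) \<Rightarrow> int \<Rightarrow> nat" where
  "maj n r \<sigma> i =
     (if cnt \<sigma> 0 (cyc_interval n (i - int r) (i + int r)) > cnt \<sigma> 1 (cyc_interval n (i - int r) (i + int r))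
      then 0 else 1)"

end

theory Submission
  imports Defs
begin

text \<open>If \<open>2r + 1 \<ge> n\<close>, every window is all of \<open>\<int>\<^sub>n\<close> and the majority is constant, so
  \<open>\<sigma>'(i) \<noteq> \<sigma>'(i + 1)\<close> forces \<open>2r + 1 < n\<close>. Then the windows around \<open>i\<close> and \<open>i + 1\<close> share the
  \<open>2r\<close> cells \<open>M = [i - r + 1, i + r]\<close> and differ only in the cells \<open>i - r\<close> and \<open>i + 1 + r\<close>.
  As \<open>|M|\<close> is even, either one colour leads on \<open>M\<close> by at least two and wins both windows, or
  \<open>M\<close> is tied and each window is decided by its extra cell. Differing majorities therefore
  mean that \<open>M\<close> is tied and the extra cells carry the values \<open>\<sigma>'(i)\<close> and \<open>\<sigma>'(i + 1)\<close>.\<close>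

lemma cyc_interval_mod_shift:
  assumes "a mod n = a' mod n" and "b - a = b' - a'"
  shows "cyc_interval n a b = cyc_interval n a' b'"
proof -
  have "(a + k) mod n = (a' + k) mod n" for k
    using assms(1) by (metis mod_add_left_eq)
  then show ?thesis
    using assms(2) by (simp add: cyc_interval_def)
qed

lemma cyc_interval_subset:
  assumes "0 < n"
  shows "cyc_interval n a b \<subseteq> {0..<n}"
  using assms by (auto simp: cyc_interval_def)

lemma finite_cyc_interval [simp]: "finite (cyc_interval n a b)"
  by (simp add: cyc_interval_def)

lemma cyc_interval_full:
  assumes "0 < n" and "n \<le> b - a + 1"
  shows "cyc_interval n a b = {0..<n}"
proof
  show "{0..<n} \<subseteq> cyc_interval n a b"
  proof
    fix y assume y: "y \<in> {0..<n}"
    have "(y - a) mod n < n"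
      using assms(1) by simp
    then have "(y - a) mod n \<le> b - a"
      using assms(2) by linarith
    then have "(y - a) mod n \<in> {0..b - a}"
      using assms(1) by simp
    moreover have "(a + (y - a) mod n) mod n = y"
      using y by (simp add: mod_add_right_eq)
    ultimately show "y \<in> cyc_interval n a b"
      unfolding cyc_interval_def by (metis image_eqI)
  qed
qed (rule cyc_interval_subset[OF assms(1)])

lemma cyc_interval_insert_left:
  assumes "a \<le> b"
  shows "cyc_interval n a b = insert (a mod n) (cyc_interval n (a + 1) b)"
proof -
  have shift: "(\<lambda>k. (a + k) mod n) \<circ> plus 1 = (\<lambda>k. (a + 1 + k) mod n)"
    by (simp add: comp_def add.assoc)
  have "cyc_interval n (a + 1) b = (\<lambda>k. (a + k) mod n) ` (plus 1 ` {0..b - (a + 1)})"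
    by (simp only: cyc_interval_def image_comp shift)
  also have "\<dots> = (\<lambda>k. (a + k) mod n) ` {1..b - a}"
    by simp
  finally have "cyc_interval n (a + 1) b = (\<lambda>k. (a + k) mod n) ` {1..b - a}" .
  moreover have "{0..b - a} = insert 0 {1..b - a}"
    using assms by auto
  ultimately show ?thesis
    by (simp add: cyc_interval_def)
qed

lemma cyc_interval_insert_right:
  assumes "a \<le> b + 1"
  shows "cyc_interval n a (b + 1) = insert ((b + 1) mod n) (cyc_interval n a b)"
proof -
  have "{0..b + 1 - a} = insert (b + 1 - a) {0..b - a}"
    using assms by auto
  then show ?thesis
    by (simp add: cyc_interval_def)
qed

lemma card_cyc_interval:
  assumes "a \<le> b + 1" and "b - a < n"
  shows "card (cyc_interval n a b) = nat (b - a + 1)"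
proof -
  have "inj_on (\<lambda>k. (a + k) mod n) {0..b - a}"
  proof
    fix x y assume "x \<in> {0..b - a}" "y \<in> {0..b - a}" and "(a + x) mod n = (a + y) mod n"
    then have "x mod n = y mod n"
      by (metis add_diff_cancel_left' mod_diff_left_eq)
    then show "x = y"
      using \<open>x \<in> {0..b - a}\<close> \<open>y \<in> {0..b - a}\<close> assms(2) by simp
  qed
  then show ?thesis
    by (simp add: cyc_interval_def card_image)
qed

lemma mod_notin_cyc_interval_left:
  assumes "a \<le> b + 1" and "b - a + 1 < n"
  shows "(a - 1) mod n \<notin> cyc_interval n a b"
proof
  assume "(a - 1) mod n \<in> cyc_interval n a b"
  then have "cyc_interval n (a - 1) b = cyc_interval n a b"
    using assms cyc_interval_insert_left[of "a - 1" b n] by (simp add: insert_absorb)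
  then show False
    using assms card_cyc_interval[of "a - 1" b n] card_cyc_interval[of a b n] by simp
qed

lemma mod_notin_cyc_interval_right:
  assumes "a \<le> b + 1" and "b - a + 1 < n"
  shows "(b + 1) mod n \<notin> cyc_interval n a b"
proof
  assume "(b + 1) mod n \<in> cyc_interval n a b"
  then have "cyc_interval n a (b + 1) = cyc_interval n a b"
    using assms cyc_interval_insert_right[of a b n] by (simp add: insert_absorb)
  then show False
    using assms card_cyc_interval[of a "b + 1" n] card_cyc_interval[of a b n] by simp
qed

definition majority :: "(int \<Rightarrow> nat) \<Rightarrow> int set \<Rightarrow> nat" where
  "majority \<sigma> W = (if cnt \<sigma> 0 W > cnt \<sigma> 1 W then 0 else 1)"

lemma maj_mod_eq_majority:
  "maj n r \<sigma> (i mod n) = majority \<sigma> (cyc_interval n (i - int r) (i + int r))"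
proof -
  have "cyc_interval n (i mod n - int r) (i mod n + int r) = cyc_interval n (i - int r) (i + int r)"
    by (rule cyc_interval_mod_shift) (simp_all add: mod_diff_left_eq)
  then show ?thesis
    by (simp add: maj_def majority_def)
qed

lemma cnt_insert:
  assumes "finite M" and "x \<notin> M"
  shows "cnt \<sigma> \<beta> (insert x M) = (if \<sigma> x = \<beta> then 1 else 0) + cnt \<sigma> \<beta> M"
proof -
  have "{l \<in> insert x M. \<sigma> l = \<beta>} =
      (if \<sigma> x = \<beta> then insert x {l \<in> M. \<sigma> l = \<beta>} else {l \<in> M. \<sigma> l = \<beta>})"
    by auto
  then show ?thesis
    using assms by (simp add: cnt_def)
qed

lemma cnt_0_add_cnt_1:
  assumes "finite M" and "\<forall>l\<in>M. \<sigma> l \<in> {0, 1}"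
  shows "cnt \<sigma> 0 M + cnt \<sigma> 1 M = card M"
proof -
  have "M = {l \<in> M. \<sigma> l = 0} \<union> {l \<in> M. \<sigma> l = 1}"
    using assms(2) by auto
  moreover have "card ({l \<in> M. \<sigma> l = 0} \<union> {l \<in> M. \<sigma> l = 1}) =
      card {l \<in> M. \<sigma> l = 0} + card {l \<in> M. \<sigma> l = 1}"
    using assms(1) by (intro card_Un_disjoint) auto
  ultimately have "card M = card {l \<in> M. \<sigma> l = 0} + card {l \<in> M. \<sigma> l = 1}"
    by metis
  then show ?thesis
    by (simp add: cnt_def)
qed

lemma majority_insert_even:
  assumes "finite M" and "even (card M)" and "x \<notin> M" and "\<forall>l\<in>insert x M. \<sigma> l \<in> {0, 1}"
  shows "majority \<sigma> (insert x M) = (if cnt \<sigma> 0 M = cnt \<sigma> 1 M then \<sigma> x else majority \<sigma> M)"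
proof -
  define c0 c1 where "c0 = cnt \<sigma> 0 M" and "c1 = cnt \<sigma> 1 M"
  have "even (c0 + c1)"
    using assms cnt_0_add_cnt_1[of M \<sigma>] by (simp add: c0_def c1_def)
  moreover have "\<sigma> x = 0 \<or> \<sigma> x = 1"
    using assms(4) by simp
  ultimately show ?thesis
    unfolding majority_def cnt_insert[OF assms(1,3)] c0_def[symmetric] c1_def[symmetric]
    by (elim disjE) (simp, presburger)+
qed

lemma majority_insert_differ:
  assumes "finite M" and "even (card M)" and "x \<notin> M" and "y \<notin> M"
    and "\<forall>l\<in>insert x (insert y M). \<sigma> l \<in> {0, 1}"
    and "majority \<sigma> (insert x M) \<noteq> majority \<sigma> (insert y M)"
  shows "\<sigma> x = majority \<sigma> (insert x M) \<and> \<sigma> y = majority \<sigma> (insert y M)"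
proof -
  have majority_x: "majority \<sigma> (insert x M) = (if cnt \<sigma> 0 M = cnt \<sigma> 1 M then \<sigma> x else majority \<sigma> M)"
    and majority_y: "majority \<sigma> (insert y M) = (if cnt \<sigma> 0 M = cnt \<sigma> 1 M then \<sigma> y else majority \<sigma> M)"
    by (rule majority_insert_even; use assms(1-5) in simp)+
  have "cnt \<sigma> 0 M = cnt \<sigma> 1 M"
  proof (rule ccontr)
    assume "cnt \<sigma> 0 M \<noteq> cnt \<sigma> 1 M"
    then show False
      using assms(6) by (simp add: majority_x majority_y)
  qed
  then show ?thesis
    by (simp add: majority_x majority_y)
qed

lemma majority_adjacent_windows_differ:
  fixes r :: nat
  assumes wide: "2 * int r + 1 < n" and "\<forall>l\<in>{0..<n}. \<sigma> l \<in> {0, 1}"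
    and "majority \<sigma> (cyc_interval n (i - int r) (i + int r)) \<noteq>
      majority \<sigma> (cyc_interval n (i + 1 - int r) (i + 1 + int r))"
  shows "\<sigma> ((i - int r) mod n) = majority \<sigma> (cyc_interval n (i - int r) (i + int r)) \<and>
    \<sigma> ((i + 1 + int r) mod n) = majority \<sigma> (cyc_interval n (i + 1 - int r) (i + 1 + int r))"
proof -
  define M where "M = cyc_interval n (i - int r + 1) (i + int r)"
  have W0_eq: "cyc_interval n (i - int r) (i + int r) = insert ((i - int r) mod n) M"
    and W1_eq: "cyc_interval n (i + 1 - int r) (i + 1 + int r) = insert ((i + 1 + int r) mod n) M"
    using cyc_interval_insert_left[of "i - int r" "i + int r" n]
      cyc_interval_insert_right[of "i - int r + 1" "i + int r" n]
    by (simp_all add: M_def algebra_simps)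
  have range: "\<forall>l\<in>cyc_interval n (i - int r) (i + int r) \<union> cyc_interval n (i + 1 - int r) (i + 1 + int r).
      \<sigma> l \<in> {0, 1}"
    using assms(2) cyc_interval_subset[of n] wide by fastforce
  show ?thesis
    unfolding W0_eq W1_eq
  proof (rule majority_insert_differ)
    show "finite M"
      by (simp add: M_def)
    show "even (card M)"
      using wide card_cyc_interval[of "i - int r + 1" "i + int r" n] by (simp add: M_def nat_mult_distrib)
    show "(i - int r) mod n \<notin> M"
      using wide mod_notin_cyc_interval_left[of "i - int r + 1" "i + int r" n] by (simp add: M_def)
    show "(i + 1 + int r) mod n \<notin> M"
      using wide mod_notin_cyc_interval_right[of "i - int r + 1" "i + int r" n]
      by (simp add: M_def add.assoc add.commute[of 1])
    show "\<forall>l\<in>insert ((i - int r) mod n) (insert ((i + 1 + int r) mod n) M). \<sigma> l \<in> {0, 1}"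
      using range unfolding W0_eq W1_eq by auto
    show "majority \<sigma> (insert ((i - int r) mod n) M) \<noteq> majority \<sigma> (insert ((i + 1 + int r) mod n) M)"
      using assms(3) unfolding W0_eq W1_eq .
  qed
qed

theorem claim1:
  fixes n :: int and r :: nat and \<sigma> \<sigma>' :: "int \<Rightarrow> nat" and i :: int
  assumes "n \<ge> 1" and "r \<ge> 1"
    and "\<forall>l\<in>{0..<n}. \<sigma> l \<in> {0, 1}" and "\<forall>l\<in>{0..<n}. \<sigma>' l \<in> {0, 1}"
    and "\<forall>l\<in>{0..<n}. maj n r \<sigma> l = \<sigma>' l"
    and "i \<in> {0..<n}"
    and "\<sigma>' i \<noteq> \<sigma>' ((i + 1) mod n)"
  shows "\<sigma> ((i - int r) mod n) = \<sigma>' i \<and> \<sigma> ((i + 1 + int r) mod n) = \<sigma>' ((i + 1) mod n)"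
proof -
  have n_pos: "0 < n"
    using assms(1) by simp
  define W0 W1 where "W0 = cyc_interval n (i - int r) (i + int r)"
    and "W1 = cyc_interval n (i + 1 - int r) (i + 1 + int r)"
  have "i mod n = i"
    using assms(6) by simp
  then have maj0: "majority \<sigma> W0 = \<sigma>' i"
    using assms(5,6) maj_mod_eq_majority[of n r \<sigma> i] by (simp add: W0_def)
  have maj1: "majority \<sigma> W1 = \<sigma>' ((i + 1) mod n)"
    using assms(5) maj_mod_eq_majority[of n r \<sigma> "i + 1"] n_pos by (simp add: W1_def)
  have wide: "2 * int r + 1 < n"
  proof (rule ccontr)
    assume "\<not> ?thesis"
    then have "W0 = W1"
      using n_pos by (simp add: W0_def W1_def cyc_interval_full)
    then show False
      using maj0 maj1 assms(7) by simp
  qed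
  have "majority \<sigma> W0 \<noteq> majority \<sigma> W1"
    using maj0 maj1 assms(7) by simp
  then show ?thesis
    using majority_adjacent_windows_differ[OF wide assms(3)] maj0 maj1 unfolding W0_def W1_def by simp
qed

end
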